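(* Let $G_1$ ($n\times k$) and $G_0$ ($n\times l$) be fixed binary matrices such that $\widetilde G=[G_1\ G_0]$ has full column rank $k+l$, let $r=n-k-l$, and let $\mathbf m\in\{0,1\}^k$ be fixed. On the binary defect and erasure channel with the encoding and decoding described in the context, $$P(\widehat{\mathbf m}\neq\mathbf m)\le\sum_{u=d_0}^{n}\beta^u(1-\beta)^{n-u}\sum_{w=d_0}^{u}B_{0,w}\binom{n-w}{u-w}+\sum_{e=d_1}^{n}\alpha^e(1-\alpha)^{n-e}\sum_{w=d_1}^{e}A_w\binom{n-w}{e-w}.$$ If in addition $B_{0,w}\le 2^{-l}\binom nw$ for all $d_0\le w\le n$ and $A_w\le 2^{-r}\binom nw$ for all $d_1\le w\le n$, then $$P(\widehat{\mathbf m}\neq\mathbf m)\le 2^{-l}(1+\beta)^n+2^{-r}(1+\alpha)^n.$$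
   Context: All arithmetic is over $\mathrm{GF}(2)$. $\mathcal C=\{\widetilde G\mathbf x:\mathbf x\in\{0,1\}^{k+l}\}$ is the $[n,k+l]$ code generated by $\widetilde G$, and $A_w$ is its number of codewords of Hamming weight $w$. $d_1$ is the minimum Hamming weight of $G_1\mathbf m'+G_0\mathbf d'$ over all $\mathbf m'\neq\mathbf 0$, $\mathbf d'\in\{0,1\}^l$. $\mathcal C_0^{\perp}=\{\mathbf x\in\{0,1\}^n: G_0^T\mathbf x=\mathbf 0\}$; $B_{0,w}$ is its number of vectors of weight $w$ and $d_0$ its minimum nonzero weight. Binary defect and erasure channel (BDEC) with parameters $(\beta,\alpha)$: each of the $n$ cells is independently defective with probability $\beta$; a defective cell is stuck at $0$ or $1$, each with probability $1/2$, independently. Writing codeword $\mathbf c$ stores $\mathbf c\circ\mathbf s$, where $(\mathbf c\circ\mathbf s)_i=s_i$ if cell $i$ is defective with stuck-at value $s_i$ and $=c_i$ otherwise. Then each of the $n$ stored bits is independently erased with probability $\alpha$ (independently of everything else); $\mathcal V$ is the set of unerased positions and the decoder observes $\mathcal V$ and $\mathbf y^{\mathcal V}=(\mathbf c\circ\mathbf s)^{\mathcal V}$. For a matrix/vector, superscript $\mathcal A$ denotes the rows indexed by the set $\mathcal A$. Encoding: with $\mathcal U$ the set of defects and $\mathbf b^{\mathcal U}=(G_1\mathbf m)^{\mathcal U}+\mathbf s^{\mathcal U}$, find $\mathbf d\in\{0,1\}^l$ with $G_0^{\mathcal U}\mathbf d=\mathbf b^{\mathcal U}$ and write $\mathbf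 c=G_1\mathbf m+G_0\mathbf d$; encoding failure ($E=0$) if no such $\mathbf d$ exists. Decoding: solve $\widetilde G^{\mathcal V}\binom{\widehat{\mathbf m}}{\widehat{\mathbf d}}=\mathbf y^{\mathcal V}$. The event $\{\widehat{\mathbf m}\neq\mathbf m\}$ (recovery failure) is declared if encoding fails, or if the solution set of this linear system contains vectors with different message parts $\widehat{\mathbf m}$. *)

theory Defs
  imports Complex_Main "HOL-Library.Z2"
begin

text \<open>A vector of length k is a function
  nat => bit vanishing outside {0..<k}; an n x k matrix is a function nat => nat => bit of
  which only entries i < n, j < k are used.\<close>

type_synonym bvec = "nat \<Rightarrow> bit"
type_synonym bmat = "nat \<Rightarrow> nat \<Rightarrow> bit"

definition vecs :: "nat \<Rightarrow> bvec set" where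
  "vecs k = {x. \<forall>i\<ge>k. x i = 0}"

text \<open>vectors supported on a set U (stuck-at values on the defect set)\<close>
definition vecs_on :: "nat set \<Rightarrow> bvec set" where
  "vecs_on U = {s. \<forall>i. i \<notin> U \<longrightarrow> s i = 0}"

definition mv :: "nat \<Rightarrow> nat \<Rightarrow> bmat \<Rightarrow> bvec \<Rightarrow> bvec" where
  "mv n m G x = (\<lambda>i. if i < n then (\<Sum>j<m. G i j * x j) else 0)"

definition hw :: "nat \<Rightarrow> bvec \<Rightarrow> nat" where
  "hw n c = card {i. i < n \<and> c i \<noteq> 0}"

definition catm :: "nat \<Rightarrow> bmat \<Rightarrow> bmat \<Rightarrow> bmat" where
  "catm k G1 G0 = (\<lambda>i j. if j < k then G1 i j else G0 i (j - k))"

definition code :: "nat \<Rightarrow> nat \<Rightarrow> nat \<Rightarrow> bmat \<Rightarrow> bmat \<Rightarrow> bvec set" where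
  "code n k l G1 G0 = mv n (k + l) (catm k G1 G0) ` vecs (k + l)"

definition A_w :: "nat \<Rightarrow> nat \<Rightarrow> nat \<Rightarrow> bmat \<Rightarrow> bmat \<Rightarrow> nat \<Rightarrow> nat" where
  "A_w n k l G1 G0 w = card {c \<in> code n k l G1 G0. hw n c = w}"

text \<open>d1 = min weight of G1 m' + G0 d' over m' nonzero; convention n+1 (i.e. infinity,
  making the corresponding sum empty) if there is no such m' (k = 0).\<close>
definition d1 :: "nat \<Rightarrow> nat \<Rightarrow> nat \<Rightarrow> bmat \<Rightarrow> bmat \<Rightarrow> nat" where
  "d1 n k l G1 G0 =
    (let D = {hw n (\<lambda>i. mv n k G1 m' i + mv n l G0 d' i) | m' d'.
                m' \<in> vecs k \<and> (\<exists>i. m' i \<noteq> 0) \<and> d' \<in> vecs l}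
     in if D = {} then n + 1 else Min D)"

definition dual0 :: "nat \<Rightarrow> nat \<Rightarrow> bmat \<Rightarrow> bvec set" where
  "dual0 n l G0 = {x \<in> vecs n. \<forall>j<l. (\<Sum>i<n. G0 i j * x i) = 0}"

definition B0_w :: "nat \<Rightarrow> nat \<Rightarrow> bmat \<Rightarrow> nat \<Rightarrow> nat" where
  "B0_w n l G0 w = card {x \<in> dual0 n l G0. hw n x = w}"

text \<open>minimum nonzero weight of C0^perp; convention n+1 (infinity) if C0^perp = {0}\<close>
definition d0 :: "nat \<Rightarrow> nat \<Rightarrow> bmat \<Rightarrow> nat" where
  "d0 n l G0 =
    (let D = {hw n x | x. x \<in> dual0 n l G0 \<and> (\<exists>i. x i \<noteq> 0)}
     in if D = {} then n + 1 else Min D)"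

definition enc_ok :: "nat \<Rightarrow> nat \<Rightarrow> nat \<Rightarrow> bmat \<Rightarrow> bmat \<Rightarrow> bvec \<Rightarrow> nat set \<Rightarrow> bvec \<Rightarrow> bvec \<Rightarrow> bool" where
  "enc_ok n k l G1 G0 m U s d \<longleftrightarrow>
     d \<in> vecs l \<and> (\<forall>i\<in>U. mv n l G0 d i = mv n k G1 m i + s i)"

definition stored :: "nat \<Rightarrow> nat \<Rightarrow> nat \<Rightarrow> bmat \<Rightarrow> bmat \<Rightarrow> bvec \<Rightarrow> nat set \<Rightarrow> bvec \<Rightarrow> bvec \<Rightarrow> bvec" where
  "stored n k l G1 G0 m U s d =
     (\<lambda>i. if i \<in> U then s i else mv n k G1 m i + mv n l G0 d i)"

definition dec_fail :: "nat \<Rightarrow> nat \<Rightarrow> nat \<Rightarrow> bmat \<Rightarrow> bmat \<Rightarrow> nat set \<Rightarrow> bvec \<Rightarrow> bool" where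
  "dec_fail n k l G1 G0 V y \<longleftrightarrow>
     (\<exists>x1 x2. x1 \<in> vecs (k + l) \<and> x2 \<in> vecs (k + l) \<and>
        (\<forall>i\<in>V. mv n (k + l) (catm k G1 G0) x1 i = y i) \<and>
        (\<forall>i\<in>V. mv n (k + l) (catm k G1 G0) x2 i = y i) \<and>
        (\<exists>j<k. x1 j \<noteq> x2 j))"

definition rec_fail :: "nat \<Rightarrow> nat \<Rightarrow> nat \<Rightarrow> bmat \<Rightarrow> bmat \<Rightarrow> bvec \<Rightarrow> nat set \<Rightarrow> bvec \<Rightarrow> nat set \<Rightarrow> bool" where
  "rec_fail n k l G1 G0 m U s V \<longleftrightarrow>
     (\<not> (\<exists>d. enc_ok n k l G1 G0 m U s d)) \<or>
     (\<exists>d. enc_ok n k l G1 G0 m U s d \<and> dec_fail n k l G1 G0 V (stored n k l G1 G0 m U s d))"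

text \<open>Probability of recovery failure on the BDEC(beta, alpha): sum over defect sets U,
  stuck values s on U (each pattern prob 2^-|U|), erasure sets E (V = complement).\<close>
definition P_fail :: "nat \<Rightarrow> nat \<Rightarrow> nat \<Rightarrow> bmat \<Rightarrow> bmat \<Rightarrow> bvec \<Rightarrow> real \<Rightarrow> real \<Rightarrow> real" where
  "P_fail n k l G1 G0 m \<beta> \<alpha> =
     (\<Sum>U\<in>Pow {..<n}. \<Sum>s\<in>vecs_on U. \<Sum>E\<in>Pow {..<n}.
        \<beta> ^ card U * (1 - \<beta>) ^ (n - card U) * (1/2) ^ card U *
        \<alpha> ^ card E * (1 - \<alpha>) ^ (n - card E) *
        (if rec_fail n k l G1 G0 m U s ({..<n} - E) then 1 else 0))"

end

theory Submission
  imports Defs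
begin

text \<open>Recovery fails in only two ways. If encoding fails, the system
  G0^U d = b^U is unsolvable for some right-hand side, so by the Fredholm alternative
  (Gaussian elimination) some nonzero word of the dual code C0^perp, hence one of weight at
  least d0, is supported inside the defect set U. If decoding is ambiguous, the difference of
  two solutions with different message parts is a codeword G1 m' + G0 d' with m' nonzero, of
  weight at least d1, vanishing on all unerased positions, i.e. supported inside the erasure
  set. The defect event does not depend on the stuck-at values, so averaging over them costs
  nothing. A union bound over the offending words, where the probability that a fixed support
  lies inside a random set is counted by supersets, gives the weight-enumerator bound; under
  the binomial-like weight hypotheses the identity
  sum_w C(n,w) C(n-w,e-w) = C(n,e) 2^e collapses it to 2^-l (1+beta)^n + 2^-r (1+alpha)^n.\<close>

definition rows_dependent :: "nat set \<Rightarrow> (nat \<Rightarrow> nat \<Rightarrow> 'a::field) \<Rightarrow> nat \<Rightarrow> bool" where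
  "rows_dependent U R l \<longleftrightarrow> (\<exists>x. (\<exists>i\<in>U. x i \<noteq> 0) \<and> (\<forall>j<l. (\<Sum>i\<in>U. x i * R i j) = 0))"

definition rows_solvable :: "nat set \<Rightarrow> (nat \<Rightarrow> nat \<Rightarrow> 'a::field) \<Rightarrow> nat \<Rightarrow> bool" where
  "rows_solvable U R l \<longleftrightarrow> (\<forall>b. \<exists>d. \<forall>i\<in>U. (\<Sum>j<l. R i j * d j) = b i)"

lemma rows_dependent_Suc:
  assumes "rows_dependent U R l" and "\<forall>i\<in>U. R i l = 0"
  shows "rows_dependent U R (Suc l)"
  using assms unfolding rows_dependent_def by (auto simp: less_Suc_eq)

lemma rows_solvable_Suc:
  assumes "rows_solvable U R l"
  shows "rows_solvable U R (Suc l)"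
proof (unfold rows_solvable_def, intro allI)
  fix b
  obtain d where "\<forall>i\<in>U. (\<Sum>j<l. R i j * d j) = b i"
    using assms unfolding rows_solvable_def by blast
  then show "\<exists>d. \<forall>i\<in>U. (\<Sum>j<Suc l. R i j * d j) = b i"
    by (intro exI[of _ "d(l := 0)"]) simp
qed

definition eliminate :: "(nat \<Rightarrow> nat \<Rightarrow> 'a::field) \<Rightarrow> nat \<Rightarrow> nat \<Rightarrow> nat \<Rightarrow> nat \<Rightarrow> 'a" where
  "eliminate R p l i j = R i j - R i l / R p l * R p j"

lemma rows_dependent_eliminate:
  assumes U: "finite U" "p \<in> U" and piv: "R p l \<noteq> 0"
    and dep: "rows_dependent (U - {p}) (eliminate R p l) l"
  shows "rows_dependent U R (Suc l)"
proof -
  obtain x' where nz: "\<exists>i\<in>U - {p}. x' i \<noteq> 0"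
    and x': "\<forall>j<l. (\<Sum>i\<in>U - {p}. x' i * eliminate R p l i j) = 0"
    using dep unfolding rows_dependent_def by blast
  define x where "x = x'(p := - (\<Sum>i\<in>U - {p}. x' i * R i l) / R p l)"
  have split: "(\<Sum>i\<in>U. x i * R i j) = x p * R p j + (\<Sum>i\<in>U - {p}. x' i * R i j)" for j
    using U by (simp add: sum.remove x_def)
  have "(\<Sum>i\<in>U. x i * R i j) = 0" if "j < Suc l" for j
  proof (cases "j = l")
    case True
    have "x p * R p l = - (\<Sum>i\<in>U - {p}. x' i * R i l)" using piv by (simp add: x_def)
    then show ?thesis unfolding split True by simp
  next
    case False
    have "(\<Sum>i\<in>U - {p}. x' i * eliminate R p l i j) = (\<Sum>i\<in>U - {p}. x' i * R i j) + x p * R p j"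
      by (simp add: x_def eliminate_def right_diff_distrib sum_subtractf sum_distrib_right
          sum_divide_distrib mult.assoc mult.left_commute)
    with False that x' show ?thesis unfolding split by (simp add: add.commute)
  qed
  moreover have "\<exists>i\<in>U. x i \<noteq> 0" using nz by (auto simp: x_def)
  ultimately show ?thesis unfolding rows_dependent_def by blast
qed

lemma rows_solvable_eliminate:
  assumes U: "p \<in> U" and piv: "R p l \<noteq> 0"
    and sol: "rows_solvable (U - {p}) (eliminate R p l) l"
  shows "rows_solvable U R (Suc l)"
proof (unfold rows_solvable_def, intro allI)
  fix b
  obtain d' where d': "\<forall>i\<in>U - {p}. (\<Sum>j<l. eliminate R p l i j * d' j) = b i - R i l / R p l * b p"
    using sol[unfolded rows_solvable_def, rule_format, of "\<lambda>i. b i - R i l / R p l * b p"] by blast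
  define t where "t = (b p - (\<Sum>j<l. R p j * d' j)) / R p l"
  have "(\<Sum>j<l. R i j * d' j) + R i l * t = b i" if "i \<in> U" for i
  proof (cases "i = p")
    case True
    then show ?thesis using piv by (simp add: t_def)
  next
    case False
    have expand: "(\<Sum>j<l. eliminate R p l i j * d' j)
        = (\<Sum>j<l. R i j * d' j) - R i l / R p l * (\<Sum>j<l. R p j * d' j)"
      by (simp add: eliminate_def left_diff_distrib sum_subtractf sum_distrib_left mult.assoc)
    from d' False that have "(\<Sum>j<l. eliminate R p l i j * d' j) = b i - R i l / R p l * b p"
      by blast
    then have "(\<Sum>j<l. R i j * d' j) - R i l / R p l * (\<Sum>j<l. R p j * d' j) = b i - R i l / R p l * b p"
      unfolding expand .
    then show ?thesis using piv by (simp add: t_def field_simps)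
  qed
  then show "\<exists>d. \<forall>i\<in>U. (\<Sum>j<Suc l. R i j * d j) = b i"
    by (intro exI[of _ "d'(l := t)"]) simp
qed

lemma rows_dependent_or_solvable:
  assumes "finite U"
  shows "rows_dependent U R l \<or> rows_solvable U R l"
  using assms
proof (induction l arbitrary: U R)
  case 0
  then show ?case
    by (cases "U = {}") (auto simp: rows_dependent_def rows_solvable_def intro!: exI[of _ "\<lambda>_. 1"])
next
  case (Suc l)
  show ?case
  proof (cases "\<exists>p\<in>U. R p l \<noteq> 0")
    case True
    then obtain p where p: "p \<in> U" "R p l \<noteq> 0" by blast
    from Suc.IH[of "U - {p}" "eliminate R p l"] Suc.prems show ?thesis
      using rows_dependent_eliminate[of U p R l] rows_solvable_eliminate[of p U R l] p by blast
  next
    case False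
    then show ?thesis
      using Suc.IH[OF Suc.prems, of R] rows_dependent_Suc rows_solvable_Suc by blast
  qed
qed

lemma card_supersets_of_card:
  assumes A: "finite A" and SA: "S \<subseteq> A" and Se: "card S \<le> e"
  shows "card {E. E \<subseteq> A \<and> S \<subseteq> E \<and> card E = e} = (card A - card S) choose (e - card S)"
proof -
  have fS: "finite S" using A SA finite_subset by blast
  have "bij_betw (\<lambda>F. F \<union> S) {F. F \<subseteq> A - S \<and> card F = e - card S} {E. E \<subseteq> A \<and> S \<subseteq> E \<and> card E = e}"
  proof (rule bij_betw_byWitness[where f' = "\<lambda>E. E - S"])
    show "(\<lambda>F. F \<union> S) ` {F. F \<subseteq> A - S \<and> card F = e - card S} \<subseteq> {E. E \<subseteq> A \<and> S \<subseteq> E \<and> card E = e}"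
    proof clarify
      fix F assume F: "F \<subseteq> A - S" "card F = e - card S"
      then have "card (F \<union> S) = card F + card S"
        using A fS by (intro card_Un_disjoint) (auto dest: finite_subset)
      with F SA Se show "F \<union> S \<subseteq> A \<and> S \<subseteq> F \<union> S \<and> card (F \<union> S) = e" by auto
    qed
    show "(\<lambda>E. E - S) ` {E. E \<subseteq> A \<and> S \<subseteq> E \<and> card E = e} \<subseteq> {F. F \<subseteq> A - S \<and> card F = e - card S}"
      using fS by (auto simp: card_Diff_subset)
  qed auto
  then have "card {E. E \<subseteq> A \<and> S \<subseteq> E \<and> card E = e} = card {F. F \<subseteq> A - S \<and> card F = e - card S}"
    by (simp add: bij_betw_same_card)
  also have "\<dots> = (card A - card S) choose (e - card S)"
    using A SA fS by (simp add: n_subsets card_Diff_subset)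
  finally show ?thesis .
qed

lemma sum_Pow_supersets:
  fixes f :: "nat \<Rightarrow> 'a::comm_semiring_1"
  assumes S: "S \<subseteq> {..<n}"
  shows "(\<Sum>E\<in>Pow {..<n}. if S \<subseteq> E then f (card E) else 0)
       = (\<Sum>e=card S..n. f e * of_nat ((n - card S) choose (e - card S)))"
proof -
  let ?P = "{E\<in>Pow {..<n}. S \<subseteq> E}"
  have card_bounds: "card E \<in> {card S..n}" if "E \<in> ?P" for E
    using that card_mono[of E S] card_mono[of "{..<n}" E] by (auto dest: finite_subset)
  have "(\<Sum>E\<in>Pow {..<n}. if S \<subseteq> E then f (card E) else 0) = (\<Sum>E\<in>?P. f (card E))"
    using sum.inter_filter[of "Pow {..<n}" "\<lambda>E. f (card E)" "\<lambda>E. S \<subseteq> E"] by simp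
  also have "\<dots> = (\<Sum>e=card S..n. \<Sum>E\<in>{E\<in>?P. card E = e}. f (card E))"
    by (rule sum.group[symmetric]) (use card_bounds in auto)
  also have "\<dots> = (\<Sum>e=card S..n. f e * of_nat ((n - card S) choose (e - card S)))"
  proof (rule sum.cong[OF refl])
    fix e assume e: "e \<in> {card S..n}"
    have "{E\<in>?P. card E = e} = {E. E \<subseteq> {..<n} \<and> S \<subseteq> E \<and> card E = e}" by auto
    then have "card {E\<in>?P. card E = e} = (n - card S) choose (e - card S)"
      using card_supersets_of_card[of "{..<n}" S e] S e by simp
    then show "(\<Sum>E\<in>{E\<in>?P. card E = e}. f (card E)) = f e * of_nat ((n - card S) choose (e - card S))"
      by (simp add: mult.commute)
  qed
  finally show ?thesis .
qed

lemma sum_Pow_binomial_weights: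
  fixes p :: "'a::comm_ring_1"
  shows "(\<Sum>E\<in>Pow {..<n}. p ^ card E * (1 - p) ^ (n - card E)) = 1"
proof -
  have "(\<Sum>E\<in>Pow {..<n}. p ^ card E * (1 - p) ^ (n - card E))
      = (\<Sum>e\<le>n. of_nat (n choose e) * p ^ e * (1 - p) ^ (n - e))"
    using sum_Pow_supersets[of "{}" n "\<lambda>e. p ^ e * (1 - p) ^ (n - e)"]
    by (simp add: atMost_atLeast0 mult_ac)
  also have "\<dots> = (p + (1 - p)) ^ n" by (rule binomial_ring[symmetric])
  finally show ?thesis by simp
qed

lemma sum_Pow_binomial_weights_add:
  fixes p x :: "'a::comm_ring_1"
  shows "(\<Sum>E\<in>Pow {..<n}. p ^ card E * (1 - p) ^ (n - card E) * (x + f E))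
       = x + (\<Sum>E\<in>Pow {..<n}. p ^ card E * (1 - p) ^ (n - card E) * f E)"
proof -
  have "(\<Sum>E\<in>Pow {..<n}. p ^ card E * (1 - p) ^ (n - card E) * (x + f E))
      = (\<Sum>E\<in>Pow {..<n}. p ^ card E * (1 - p) ^ (n - card E)) * x
        + (\<Sum>E\<in>Pow {..<n}. p ^ card E * (1 - p) ^ (n - card E) * f E)"
    by (simp add: distrib_left sum.distrib sum_distrib_right)
  then show ?thesis by (simp add: sum_Pow_binomial_weights)
qed

lemma sum_triangle_swap:
  fixes d n :: nat and F :: "nat \<Rightarrow> nat \<Rightarrow> 'a::comm_monoid_add"
  shows "(\<Sum>e=d..n. \<Sum>w=d..e. F w e) = (\<Sum>w=d..n. \<Sum>e=w..n. F w e)"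
proof -
  have "(\<Sum>e=d..n. \<Sum>w=d..e. F w e) = (\<Sum>e=d..n. \<Sum>w\<in>{w\<in>{d..n}. w \<le> e}. F w e)"
    by (intro sum.cong) auto
  also have "\<dots> = (\<Sum>w=d..n. \<Sum>e\<in>{e\<in>{d..n}. w \<le> e}. F w e)"
    by (rule sum.swap_restrict) auto
  also have "\<dots> = (\<Sum>w=d..n. \<Sum>e=w..n. F w e)"
    by (intro sum.cong) auto
  finally show ?thesis .
qed

lemma sum_choose_mult:
  assumes "e \<le> n"
  shows "(\<Sum>w=0..e. (n choose w) * ((n - w) choose (e - w))) = (n choose e) * 2 ^ e"
proof -
  have "(\<Sum>w=0..e. (n choose w) * ((n - w) choose (e - w))) = (\<Sum>w\<le>e. (n choose e) * (e choose w))"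
    using assms by (intro sum.cong) (auto simp: choose_mult atMost_atLeast0)
  also have "\<dots> = (n choose e) * 2 ^ e" by (simp add: choose_row_sum flip: sum_distrib_left)
  finally show ?thesis .
qed

definition supp :: "nat \<Rightarrow> bvec \<Rightarrow> nat set" where
  "supp n c = {i. i < n \<and> c i \<noteq> 0}"

definition word_within :: "nat \<Rightarrow> bvec set \<Rightarrow> nat \<Rightarrow> nat set \<Rightarrow> bool" where
  "word_within n C d E \<longleftrightarrow> (\<exists>c\<in>C. d \<le> hw n c \<and> supp n c \<subseteq> E)"

lemma hw_eq_card_supp: "hw n c = card (supp n c)"
  by (simp add: hw_def supp_def)

lemma supp_subset: "supp n c \<subseteq> {..<n}"
  by (auto simp: supp_def)

lemma hw_le: "hw n c \<le> n"
  using card_mono[OF _ supp_subset] by (simp add: hw_eq_card_supp)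

lemma of_bool_bex_le_sum:
  assumes "finite A"
  shows "of_bool (\<exists>x\<in>A. P x) \<le> (\<Sum>x\<in>A. of_bool (P x) :: 'a::linordered_semidom)"
proof (cases "\<exists>x\<in>A. P x")
  case True
  then obtain x where "x \<in> A" "P x" by blast
  then have "of_bool (P x) \<le> (\<Sum>x\<in>A. of_bool (P x) :: 'a)"
    using assms by (intro member_le_sum) auto
  with \<open>P x\<close> True show ?thesis by simp
qed (simp add: sum_nonneg)

lemma sum_binomial_weights_word_within_le:
  fixes p :: real and C :: "bvec set"
  assumes C: "finite C" and p: "0 \<le> p" "p \<le> 1"
  shows "(\<Sum>E\<in>Pow {..<n}. p ^ card E * (1 - p) ^ (n - card E) * of_bool (word_within n C d E))
       \<le> (\<Sum>e=d..n. p ^ e * (1 - p) ^ (n - e) *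
            (\<Sum>w=d..e. real (card {c\<in>C. hw n c = w}) * real ((n - w) choose (e - w))))"
proof -
  define wt where "wt e = p ^ e * (1 - p) ^ (n - e)" for e
  define N where "N w = real (card {c\<in>C. hw n c = w})" for w
  define g where "g w = (\<Sum>e=w..n. wt e * real ((n - w) choose (e - w)))" for w
  define C' where "C' = {c\<in>C. d \<le> hw n c}"
  have "finite C'" using C by (simp add: C'_def)
  have within_iff: "word_within n C d E \<longleftrightarrow> (\<exists>c\<in>C'. supp n c \<subseteq> E)" for E
    by (auto simp: word_within_def C'_def)
  have "of_bool (word_within n C d E) \<le> (\<Sum>c\<in>C'. of_bool (supp n c \<subseteq> E) :: real)" for E
    unfolding within_iff by (rule of_bool_bex_le_sum[OF \<open>finite C'\<close>])
  then have "(\<Sum>E\<in>Pow {..<n}. wt (card E) * of_bool (word_within n C d E))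
      \<le> (\<Sum>E\<in>Pow {..<n}. wt (card E) * (\<Sum>c\<in>C'. of_bool (supp n c \<subseteq> E)))"
    using p by (intro sum_mono mult_left_mono) (simp_all add: wt_def)
  also have "\<dots> = (\<Sum>c\<in>C'. \<Sum>E\<in>Pow {..<n}. if supp n c \<subseteq> E then wt (card E) else 0)"
    by (subst sum.swap) (simp add: sum_distrib_left of_bool_def if_distrib cong: if_cong)
  also have "\<dots> = (\<Sum>c\<in>C'. g (hw n c))"
    by (simp add: sum_Pow_supersets[OF supp_subset] g_def hw_eq_card_supp)
  also have "\<dots> = (\<Sum>w=d..n. \<Sum>c\<in>{c\<in>C'. hw n c = w}. g (hw n c))"
    by (rule sum.group[symmetric]) (use \<open>finite C'\<close> hw_le in \<open>auto simp: C'_def\<close>)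
  also have "\<dots> = (\<Sum>w=d..n. N w * g w)"
    by (intro sum.cong refl) (auto simp: N_def C'_def intro!: arg_cong[where f = card])
  also have "\<dots> = (\<Sum>w=d..n. \<Sum>e=w..n. wt e * (N w * real ((n - w) choose (e - w))))"
    by (simp add: g_def sum_distrib_left mult_ac)
  also have "\<dots> = (\<Sum>e=d..n. wt e * (\<Sum>w=d..e. N w * real ((n - w) choose (e - w))))"
    by (simp add: sum_triangle_swap[symmetric] sum_distrib_left)
  finally show ?thesis by (simp add: wt_def N_def)
qed

lemma sum_binomial_weights_enumerator_le:
  fixes p c :: real and A :: "nat \<Rightarrow> nat"
  assumes p: "0 \<le> p" "p \<le> 1" and c: "0 \<le> c"
    and A: "\<forall>w. d \<le> w \<and> w \<le> n \<longrightarrow> real (A w) \<le> c * real (n choose w)"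
  shows "(\<Sum>e=d..n. p ^ e * (1 - p) ^ (n - e) * (\<Sum>w=d..e. real (A w) * real ((n - w) choose (e - w))))
       \<le> c * (1 + p) ^ n"
proof -
  define wt where "wt e = p ^ e * (1 - p) ^ (n - e)" for e
  have wt: "0 \<le> wt e" for e using p by (simp add: wt_def)
  have choose: "(\<Sum>w=0..e. real (n choose w) * real ((n - w) choose (e - w))) = real (n choose e) * 2 ^ e"
    if "e \<le> n" for e
    using arg_cong[OF sum_choose_mult[OF that], of real] by simp
  have "(\<Sum>e=d..n. wt e * (\<Sum>w=d..e. real (A w) * real ((n - w) choose (e - w))))
      \<le> (\<Sum>e=d..n. wt e * (c * (\<Sum>w=0..e. real (n choose w) * real ((n - w) choose (e - w)))))"
  proof (intro sum_mono mult_left_mono wt)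
    fix e assume e: "e \<in> {d..n}"
    have "(\<Sum>w=d..e. real (A w) * real ((n - w) choose (e - w)))
        \<le> (\<Sum>w=d..e. c * real (n choose w) * real ((n - w) choose (e - w)))"
      using A e by (intro sum_mono mult_right_mono) auto
    also have "\<dots> \<le> (\<Sum>w=0..e. c * real (n choose w) * real ((n - w) choose (e - w)))"
      using c by (intro sum_mono2) auto
    finally show "(\<Sum>w=d..e. real (A w) * real ((n - w) choose (e - w)))
        \<le> c * (\<Sum>w=0..e. real (n choose w) * real ((n - w) choose (e - w)))"
      by (simp add: sum_distrib_left mult_ac)
  qed
  also have "\<dots> \<le> (\<Sum>e=0..n. wt e * (c * (\<Sum>w=0..e. real (n choose w) * real ((n - w) choose (e - w)))))"
    using wt c by (intro sum_mono2) (auto intro!: mult_nonneg_nonneg sum_nonneg)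
  also have "\<dots> = c * (\<Sum>e\<le>n. of_nat (n choose e) * (2 * p) ^ e * (1 - p) ^ (n - e))"
    by (simp add: choose wt_def sum_distrib_left atMost_atLeast0 power_mult_distrib mult_ac)
  also have "\<dots> = c * (2 * p + (1 - p)) ^ n" by (simp only: binomial_ring)
  also have "\<dots> = c * (1 + p) ^ n" by (simp add: add.commute)
  finally show ?thesis by (simp add: wt_def)
qed

lemma sum_lessThan_add:
  fixes f :: "nat \<Rightarrow> 'a::comm_monoid_add"
  shows "(\<Sum>j<k + l. f j) = (\<Sum>j<k. f j) + (\<Sum>j<l. f (j + k))"
  by (induction l) (simp_all add: add_ac)

lemma mv_catm:
  "mv n (k + l) (catm k G1 G0) x
     = (\<lambda>i. mv n k G1 (\<lambda>j. if j < k then x j else 0) i + mv n l G0 (\<lambda>j. if j < l then x (j + k) else 0) i)"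
  by (auto simp: mv_def catm_def sum_lessThan_add intro!: sum.cong)

lemma bit_add_eq_0_iff: "(a::bit) + b = 0 \<longleftrightarrow> a = b"
  by (cases a; cases b) simp_all

lemma mv_add: "mv n q G (\<lambda>j. a j + b j) = (\<lambda>i. mv n q G a i + mv n q G b i)"
  by (rule ext) (simp add: mv_def distrib_left sum.distrib del: add_bit_eq_xor mult_bit_eq_and)

lemma d0_le_hw:
  assumes "x \<in> dual0 n l G0" and "\<exists>i. x i \<noteq> 0"
  shows "d0 n l G0 \<le> hw n x"
proof -
  let ?D = "{hw n x | x. x \<in> dual0 n l G0 \<and> (\<exists>i. x i \<noteq> 0)}"
  have "hw n x \<in> ?D" using assms by blast
  moreover have "finite ?D" by (rule finite_subset[of _ "{..n}"]) (auto simp: hw_le)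
  ultimately show ?thesis by (auto simp: d0_def Let_def)
qed

lemma d1_le_hw:
  assumes "m' \<in> vecs k" and "\<exists>i. m' i \<noteq> 0" and "d' \<in> vecs l"
  shows "d1 n k l G1 G0 \<le> hw n (\<lambda>i. mv n k G1 m' i + mv n l G0 d' i)"
proof -
  let ?D = "{hw n (\<lambda>i. mv n k G1 m' i + mv n l G0 d' i) | m' d'.
               m' \<in> vecs k \<and> (\<exists>i. m' i \<noteq> 0) \<and> d' \<in> vecs l}"
  have mem: "hw n (\<lambda>i. mv n k G1 m' i + mv n l G0 d' i) \<in> ?D" using assms by blast
  then have "d1 n k l G1 G0 = Min ?D" unfolding d1_def Let_def by (intro if_not_P) blast
  moreover have "finite ?D" by (rule finite_subset[of _ "{..n}"]) (auto simp: hw_le)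
  ultimately show ?thesis using mem by simp
qed

lemma enc_ok_if_rows_solvable:
  assumes U: "U \<subseteq> {..<n}" and "rows_solvable U G0 l"
  shows "\<exists>d. enc_ok n k l G1 G0 m U s d"
proof -
  obtain d where d: "\<forall>i\<in>U. (\<Sum>j<l. G0 i j * d j) = mv n k G1 m i + s i"
    using assms(2)[unfolded rows_solvable_def, rule_format, of "\<lambda>i. mv n k G1 m i + s i"] by blast
  define d' where "d' j = (if j < l then d j else 0)" for j
  have "mv n l G0 d' i = mv n k G1 m i + s i" if "i \<in> U" for i
    using U d that by (auto simp: mv_def d'_def intro!: sum.cong)
  then have "enc_ok n k l G1 G0 m U s d'"
    by (simp add: enc_ok_def vecs_def d'_def)
  then show ?thesis by blast
qed

lemma word_within_dual0_if_rows_dependent: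
  assumes U: "U \<subseteq> {..<n}" and "rows_dependent U G0 l"
  shows "word_within n (dual0 n l G0) (d0 n l G0) U"
proof -
  obtain x where nz: "\<exists>i\<in>U. x i \<noteq> 0" and orth: "\<forall>j<l. (\<Sum>i\<in>U. x i * G0 i j) = 0"
    using assms(2) unfolding rows_dependent_def by blast
  define x' where "x' i = (if i \<in> U then x i else 0)" for i
  have "(\<Sum>i<n. G0 i j * x' i) = (\<Sum>i\<in>U. x i * G0 i j)" for j
  proof -
    have "(\<Sum>i<n. G0 i j * x' i) = (\<Sum>i\<in>{..<n}. if i \<in> U then x i * G0 i j else 0)"
      by (intro sum.cong) (auto simp: x'_def)
    also have "\<dots> = (\<Sum>i\<in>U. x i * G0 i j)"
      using U by (simp add: sum.If_cases Int_absorb1)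
    finally show ?thesis .
  qed
  with U orth have "x' \<in> dual0 n l G0" by (auto simp: dual0_def vecs_def x'_def)
  moreover have "\<exists>i. x' i \<noteq> 0" using nz by (auto simp: x'_def)
  moreover have "supp n x' \<subseteq> U" by (auto simp: supp_def x'_def)
  ultimately show ?thesis unfolding word_within_def using d0_le_hw by blast
qed

lemma word_within_code_if_dec_fail:
  assumes "dec_fail n k l G1 G0 ({..<n} - E) y"
  shows "word_within n (code n k l G1 G0) (d1 n k l G1 G0) E"
proof -
  obtain x1 x2 where x: "x1 \<in> vecs (k + l)" "x2 \<in> vecs (k + l)"
    and y: "\<forall>i\<in>{..<n} - E. mv n (k + l) (catm k G1 G0) x1 i = y i"
           "\<forall>i\<in>{..<n} - E. mv n (k + l) (catm k G1 G0) x2 i = y i"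
    and j: "\<exists>j<k. x1 j \<noteq> x2 j"
    using assms unfolding dec_fail_def by blast
  define x where "x j = x1 j + x2 j" for j
  define c where "c = mv n (k + l) (catm k G1 G0) x"
  define m' where "m' j = (if j < k then x j else 0)" for j
  define d' where "d' j = (if j < l then x (j + k) else 0)" for j
  have c0: "c i = 0" if "i < n" "i \<notin> E" for i
  proof -
    have "c i = mv n (k + l) (catm k G1 G0) x1 i + mv n (k + l) (catm k G1 G0) x2 i"
      unfolding c_def x_def by (simp only: mv_add)
    with y that show ?thesis by simp
  qed
  have "\<exists>i. m' i \<noteq> 0"
  proof -
    obtain j where "j < k" "x1 j \<noteq> x2 j" using j by blast
    then have "m' j \<noteq> 0" by (simp add: m'_def x_def bit_add_eq_0_iff del: add_bit_eq_xor)
    then show ?thesis ..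
  qed
  have "x \<in> vecs (k + l)" using x by (simp add: vecs_def x_def)
  then have "c \<in> code n k l G1 G0" by (simp add: code_def c_def)
  moreover have "supp n c \<subseteq> E" unfolding supp_def using c0 by blast
  moreover have "d1 n k l G1 G0 \<le> hw n c"
    unfolding c_def mv_catm m'_def[symmetric] d'_def[symmetric]
    using \<open>\<exists>i. m' i \<noteq> 0\<close> by (rule d1_le_hw[rotated]) (simp_all add: vecs_def m'_def d'_def)
  ultimately show ?thesis unfolding word_within_def by blast
qed

lemma rec_fail_imp_word_within:
  assumes U: "U \<subseteq> {..<n}" and "rec_fail n k l G1 G0 m U s ({..<n} - E)"
  shows "word_within n (dual0 n l G0) (d0 n l G0) U \<or> word_within n (code n k l G1 G0) (d1 n k l G1 G0) E"
proof -
  have "finite U" using U finite_subset by blast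
  then show ?thesis
    using assms rows_dependent_or_solvable[of U G0 l] enc_ok_if_rows_solvable[OF U]
      word_within_dual0_if_rows_dependent[OF U] word_within_code_if_dec_fail
    unfolding rec_fail_def by blast
qed

lemma vecs_on_subset_indicators: "vecs_on U \<subseteq> (\<lambda>F i. of_bool (i \<in> F)) ` Pow U"
proof
  fix s assume s: "s \<in> vecs_on U"
  have "s i = of_bool (i \<in> {i\<in>U. s i \<noteq> 0})" for i
    using s by (cases "s i = 0") (auto simp: vecs_on_def)
  then have "s = (\<lambda>i. of_bool (i \<in> {i\<in>U. s i \<noteq> 0}))" ..
  then show "s \<in> (\<lambda>F i. of_bool (i \<in> F)) ` Pow U" by (rule image_eqI) auto
qed

lemma finite_vecs_on: "finite U \<Longrightarrow> finite (vecs_on U)"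
  by (rule finite_surj[OF _ vecs_on_subset_indicators]) simp

lemma card_vecs_on_le:
  assumes "finite U"
  shows "card (vecs_on U) \<le> 2 ^ card U"
proof -
  have "card (vecs_on U) \<le> card ((\<lambda>F i. of_bool (i \<in> F) :: bit) ` Pow U)"
    using assms vecs_on_subset_indicators by (intro card_mono) simp_all
  also have "\<dots> \<le> card (Pow U)" by (rule card_image_le) (simp add: assms)
  finally show ?thesis using assms by (simp add: card_Pow)
qed

lemma finite_vecs: "finite (vecs n)"
proof -
  have "vecs n = vecs_on {..<n}" by (auto simp: vecs_def vecs_on_def)
  then show ?thesis by (simp add: finite_vecs_on)
qed

lemma finite_dual0: "finite (dual0 n l G0)"
  by (rule finite_subset[OF _ finite_vecs[of n]]) (auto simp: dual0_def)

lemma mv_in_vecs: "mv n q G x \<in> vecs n"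
  by (simp add: mv_def vecs_def)

lemma finite_code_words: "finite (code n k l G1 G0)"
  unfolding code_def by (rule finite_subset[OF _ finite_vecs[of n]]) (auto intro: mv_in_vecs)

lemma stuck_at_patterns_weight_le_1:
  assumes "finite U"
  shows "real (card (vecs_on U)) * (1/2) ^ card U \<le> 1"
proof -
  have "real (card (vecs_on U)) \<le> 2 ^ card U"
    using card_vecs_on_le[OF assms] by (metis of_nat_le_iff of_nat_numeral of_nat_power)
  then show ?thesis by (simp add: field_simps)
qed

lemma P_fail_le_union_bound:
  assumes \<beta>: "0 \<le> \<beta>" "\<beta> \<le> 1" and \<alpha>: "0 \<le> \<alpha>" "\<alpha> \<le> 1"
    and fail: "\<And>U s E. U \<subseteq> {..<n} \<Longrightarrow> rec_fail n k l G1 G0 m U s ({..<n} - E) \<Longrightarrow> A U \<or> B E"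
  shows "P_fail n k l G1 G0 m \<beta> \<alpha>
      \<le> (\<Sum>U\<in>Pow {..<n}. \<beta> ^ card U * (1 - \<beta>) ^ (n - card U) * of_bool (A U))
       + (\<Sum>E\<in>Pow {..<n}. \<alpha> ^ card E * (1 - \<alpha>) ^ (n - card E) * of_bool (B E))"
    (is "_ \<le> _ + ?PB")
proof -
  define bw where "bw U = \<beta> ^ card U * (1 - \<beta>) ^ (n - card U)" for U :: "nat set"
  define aw where "aw E = \<alpha> ^ card E * (1 - \<alpha>) ^ (n - card E)" for E :: "nat set"
  have bw: "0 \<le> bw U" for U using \<beta> by (simp add: bw_def)
  have aw: "0 \<le> aw E" for E using \<alpha> by (simp add: aw_def)
  have "0 \<le> ?PB" using aw unfolding aw_def by (simp add: sum_nonneg)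
  have "P_fail n k l G1 G0 m \<beta> \<alpha> = (\<Sum>U\<in>Pow {..<n}. \<Sum>s\<in>vecs_on U. \<Sum>E\<in>Pow {..<n}.
        bw U * (1/2) ^ card U * (aw E * of_bool (rec_fail n k l G1 G0 m U s ({..<n} - E))))"
    by (simp add: P_fail_def bw_def aw_def of_bool_def mult_ac)
  also have "\<dots> \<le> (\<Sum>U\<in>Pow {..<n}. \<Sum>s\<in>vecs_on U. \<Sum>E\<in>Pow {..<n}.
        bw U * (1/2) ^ card U * (aw E * (of_bool (A U) + of_bool (B E))))"
  proof (intro sum_mono mult_left_mono)
    fix U s E assume "U \<in> Pow {..<n}"
    then show "of_bool (rec_fail n k l G1 G0 m U s ({..<n} - E)) \<le> (of_bool (A U) + of_bool (B E) :: real)"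
      using fail[of U s E] by auto
  qed (use bw aw in simp_all)
  also have "\<dots> = (\<Sum>U\<in>Pow {..<n}. \<Sum>s\<in>vecs_on U. bw U * (1/2) ^ card U * (of_bool (A U) + ?PB))"
    by (simp add: aw_def sum_Pow_binomial_weights_add flip: sum_distrib_left)
  also have "\<dots> = (\<Sum>U\<in>Pow {..<n}. (card (vecs_on U) * (1/2) ^ card U) * (bw U * (?PB + of_bool (A U))))"
    by (simp add: algebra_simps)
  also have "\<dots> \<le> (\<Sum>U\<in>Pow {..<n}. 1 * (bw U * (?PB + of_bool (A U))))"
    using bw \<open>0 \<le> ?PB\<close>
    by (intro sum_mono mult_right_mono stuck_at_patterns_weight_le_1) (auto dest: finite_subset)
  also have "\<dots> = ?PB + (\<Sum>U\<in>Pow {..<n}. bw U * of_bool (A U))"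
    by (simp add: bw_def sum_Pow_binomial_weights_add)
  finally show ?thesis by (simp add: bw_def)
qed

theorem theorem4:
  fixes n k l :: nat and G1 G0 :: bmat and m :: bvec and \<beta> \<alpha> :: real
  assumes rank: "inj_on (mv n (k + l) (catm k G1 G0)) (vecs (k + l))"
    and msg: "m \<in> vecs k"
    and beta: "0 \<le> \<beta>" "\<beta> \<le> 1"
    and alpha: "0 \<le> \<alpha>" "\<alpha> \<le> 1"
  shows "(P_fail n k l G1 G0 m \<beta> \<alpha> \<le>
           (\<Sum>u = d0 n l G0..n. \<beta> ^ u * (1 - \<beta>) ^ (n - u) *
              (\<Sum>w = d0 n l G0..u. real (B0_w n l G0 w) * real ((n - w) choose (u - w))))
         + (\<Sum>e = d1 n k l G1 G0..n. \<alpha> ^ e * (1 - \<alpha>) ^ (n - e) *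
              (\<Sum>w = d1 n k l G1 G0..e. real (A_w n k l G1 G0 w) * real ((n - w) choose (e - w)))))
       \<and> ((\<forall>w. d0 n l G0 \<le> w \<and> w \<le> n \<longrightarrow> real (B0_w n l G0 w) \<le> (1/2) ^ l * real (n choose w)) \<and>
         (\<forall>w. d1 n k l G1 G0 \<le> w \<and> w \<le> n \<longrightarrow>
              real (A_w n k l G1 G0 w) \<le> (1/2) ^ (n - k - l) * real (n choose w))
         \<longrightarrow> P_fail n k l G1 G0 m \<beta> \<alpha> \<le> (1/2) ^ l * (1 + \<beta>) ^ n + (1/2) ^ (n - k - l) * (1 + \<alpha>) ^ n)"
    (is "?P \<le> ?S0 + ?S1 \<and> (?H0 \<and> ?H1 \<longrightarrow> _ \<le> ?R0 + ?R1)")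
proof -
  have "?P \<le> (\<Sum>U\<in>Pow {..<n}. \<beta> ^ card U * (1 - \<beta>) ^ (n - card U) *
                   of_bool (word_within n (dual0 n l G0) (d0 n l G0) U))
           + (\<Sum>E\<in>Pow {..<n}. \<alpha> ^ card E * (1 - \<alpha>) ^ (n - card E) *
                   of_bool (word_within n (code n k l G1 G0) (d1 n k l G1 G0) E))"
    using beta alpha rec_fail_imp_word_within by (rule P_fail_le_union_bound)
  also have "\<dots> \<le> ?S0 + ?S1"
    unfolding B0_w_def A_w_def
    by (intro add_mono sum_binomial_weights_word_within_le finite_dual0 finite_code_words beta alpha)
  finally have P: "?P \<le> ?S0 + ?S1" .
  show ?thesis
  proof (intro conjI impI P)
    assume "?H0 \<and> ?H1"
    then have "?S0 + ?S1 \<le> ?R0 + ?R1"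
      using beta alpha by (intro add_mono sum_binomial_weights_enumerator_le) simp_all
    with P show "?P \<le> ?R0 + ?R1" by (rule order_trans)
  qed
qed

end
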